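(* For every integer $k\ge 2$, $M_k(3)\le 2^k$.
   Context: All graphs are finite and simple. A path $v_1,\ldots,v_r$ in a graph $G$ is degree-monotone if $\deg_G(v_1)\le\cdots\le\deg_G(v_r)$; its order is $r$. Let $mp(G)$ be the maximum order of a degree-monotone path in $G$. For a $k$-edge-coloring of $K_n$ with colors $1,\ldots,k$, let $G_j$ be the spanning subgraph consisting of the edges colored $j$ (degrees taken in $G_j$). $M_k(m)$ is the minimum integer $M$ such that for every $n\ge M$ and every $k$-edge-coloring of $K_n$ there is some $j$ with $mp(G_j)\ge m$. *)

theory Defs
  imports Main
begin

text \<open>A simple graph is given by a vertex set V and a symmetric irreflexive
adjacency relation E (only its restriction to V matters).\<close>

definition deg :: "'a set \<Rightarrow> ('a \<Rightarrow> 'a \<Rightarrow> bool) \<Rightarrow> 'a \<Rightarrow> nat" where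
  "deg V E v = card {u \<in> V. E v u}"

definition is_path :: "'a set \<Rightarrow> ('a \<Rightarrow> 'a \<Rightarrow> bool) \<Rightarrow> 'a list \<Rightarrow> bool" where
  "is_path V E xs \<longleftrightarrow> xs \<noteq> [] \<and> distinct xs \<and> set xs \<subseteq> V \<and>
     (\<forall>i. Suc i < length xs \<longrightarrow> E (xs ! i) (xs ! Suc i))"

definition degree_monotone_path :: "'a set \<Rightarrow> ('a \<Rightarrow> 'a \<Rightarrow> bool) \<Rightarrow> 'a list \<Rightarrow> bool" where
  "degree_monotone_path V E xs \<longleftrightarrow> is_path V E xs \<and> sorted (map (deg V E) xs)"

definition mp :: "'a set \<Rightarrow> ('a \<Rightarrow> 'a \<Rightarrow> bool) \<Rightarrow> nat" where
  "mp V E = Max (insert 0 {length xs | xs. degree_monotone_path V E xs})"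

definition is_k_colouring :: "nat \<Rightarrow> nat \<Rightarrow> (nat \<Rightarrow> nat \<Rightarrow> nat) \<Rightarrow> bool" where
  "is_k_colouring k n c \<longleftrightarrow>
     (\<forall>u<n. \<forall>v<n. u \<noteq> v \<longrightarrow> c u v = c v u \<and> c u v \<in> {1..k})"

definition colour_class :: "(nat \<Rightarrow> nat \<Rightarrow> nat) \<Rightarrow> nat \<Rightarrow> nat \<Rightarrow> nat \<Rightarrow> bool" where
  "colour_class c j u v \<longleftrightarrow> u \<noteq> v \<and> c u v = j"

definition Mk :: "nat \<Rightarrow> nat \<Rightarrow> nat" where
  "Mk k m = (LEAST M. \<forall>n\<ge>M. \<forall>c. is_k_colouring k n c \<longrightarrow>
      (\<exists>j\<in>{1..k}. mp {0..<n} (colour_class c j) \<ge> m))"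

end

theory Submission
  imports Defs
begin

text \<open>In a graph without degree-monotone path on three vertices every vertex is a strict local
minimum or maximum of the degree, or has a single neighbour.  Calling a vertex upper when it
lies above some neighbour (degree first, label as tie-break), every edge joins an upper and a
lower vertex.  Given a colouring of \<open>K\<^sub>n\<close> with \<open>k\<close> such colour classes, the set of colours in
which a vertex is upper is an injective signature, so \<open>n \<le> 2\<^sup>k\<close>; if \<open>n = 2\<^sup>k\<close> every subset of
colours is a signature, and the vertex whose signature differs from that of \<open>v\<close> only in
colour \<open>j\<close> must be a \<open>j\<close>-neighbour of \<open>v\<close>.  These neighbours form a perfect matching of each
colour class between lower and upper vertices; since both sides carry the same number of
edges and a lower vertex has degree at most that of its partner, all degrees equal 1.
Then \<open>n - 1 = k\<close>, contradicting \<open>n = 2\<^sup>k\<close> for \<open>k \<ge> 2\<close>.\<close>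

lemma length_le_mp:
  assumes "finite V" and "degree_monotone_path V E xs"
  shows "length xs \<le> mp V E"
proof -
  have "length ys \<le> card V" if "degree_monotone_path V E ys" for ys
  proof -
    have "distinct ys" "set ys \<subseteq> V"
      using that unfolding degree_monotone_path_def is_path_def by blast+
    then show ?thesis
      using distinct_card card_mono[OF assms(1)] by metis
  qed
  then have "{length ys | ys. degree_monotone_path V E ys} \<subseteq> {..card V}"
    by auto
  then have "finite {length ys | ys. degree_monotone_path V E ys}"
    using finite_subset by blast
  then show ?thesis
    unfolding mp_def using assms(2) by (auto intro: Max_ge)
qed

lemma sum_deg_eq_if_bipartite:
  assumes "finite V"
    and sym: "\<And>u v. u \<in> V \<Longrightarrow> v \<in> V \<Longrightarrow> E u v \<Longrightarrow> E v u"
    and crossing: "\<And>u v. u \<in> V \<Longrightarrow> v \<in> V \<Longrightarrow> E u v \<Longrightarrow> P u \<longleftrightarrow> \<not> P v"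
  shows "(\<Sum>v\<in>{v\<in>V. P v}. deg V E v) = (\<Sum>v\<in>{v\<in>V. \<not> P v}. deg V E v)"
proof -
  have sum_deg: "(\<Sum>v\<in>A. deg V E v) = card (SIGMA v:A. {u\<in>V. E v u})" if "A \<subseteq> V" for A
  proof -
    have "finite A"
      using that \<open>finite V\<close> finite_subset by blast
    then show ?thesis
      unfolding deg_def using \<open>finite V\<close> by (subst card_SigmaI) auto
  qed
  let ?A = "SIGMA v:{v\<in>V. P v}. {u\<in>V. E v u}"
  let ?B = "SIGMA v:{v\<in>V. \<not> P v}. {u\<in>V. E v u}"
  have "prod.swap ` ?A = ?B"
  proof (intro subset_antisym subsetI)
    fix x
    assume "x \<in> prod.swap ` ?A"
    then obtain v u where "x = (u, v)" "v \<in> V" "P v" "u \<in> V" "E v u"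
      by auto
    then show "x \<in> ?B"
      using sym crossing by blast
  next
    fix x
    assume "x \<in> ?B"
    then obtain v u where "x = (v, u)" "v \<in> V" "\<not> P v" "u \<in> V" "E v u"
      by auto
    then have "(u, v) \<in> ?A"
      using sym crossing by blast
    then show "x \<in> prod.swap ` ?A"
      using \<open>x = (v, u)\<close> by force
  qed
  then have "card ?A = card ?B"
    using card_image[of prod.swap ?A] by simp
  then show ?thesis
    using sum_deg by simp
qed

text \<open>The tie-break on labels makes \<open>upper\<close> a proper 2-colouring also across edges joining
vertices of equal degree.\<close>
definition upper :: "'a::linorder set \<Rightarrow> ('a \<Rightarrow> 'a \<Rightarrow> bool) \<Rightarrow> 'a \<Rightarrow> bool" where
  "upper V E v \<longleftrightarrow>
     (\<exists>u\<in>V. E v u \<and> (deg V E u < deg V E v \<or> deg V E u = deg V E v \<and> u < v))"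

locale graph_without_monotone_P3 =
  fixes V :: "'a::linorder set" and E :: "'a \<Rightarrow> 'a \<Rightarrow> bool"
  assumes finite_V: "finite V"
    and sym: "\<And>u v. u \<in> V \<Longrightarrow> v \<in> V \<Longrightarrow> E u v \<Longrightarrow> E v u"
    and irrefl: "\<And>u. \<not> E u u"
    and mp_less_3: "mp V E < 3"
begin

abbreviation "d \<equiv> deg V E"

lemma no_monotone_P3:
  assumes "a \<in> V" "b \<in> V" "x \<in> V" "a \<noteq> x" "E a b" "E b x" "d a \<le> d b" "d b \<le> d x"
  shows False
proof -
  have "a \<noteq> b" "b \<noteq> x"
    using irrefl assms by metis+
  then have "degree_monotone_path V E [a, b, x]"
    using assms unfolding degree_monotone_path_def is_path_def
    by (auto simp: less_Suc_eq nth_Cons split: nat.split)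
  then show False
    using length_le_mp[OF finite_V] mp_less_3 by fastforce
qed

lemma unique_neighbour_if_equal_degree:
  assumes "u \<in> V" "v \<in> V" "E u v" "d u = d v" "w \<in> V" "E u w"
  shows "w = v"
proof (rule ccontr)
  assume "w \<noteq> v"
  show False
  proof (cases "d w \<le> d u")
    case True
    then show False
      using no_monotone_P3[of w u v] sym[of u w] assms \<open>w \<noteq> v\<close> by simp
  next
    case False
    then show False
      using no_monotone_P3[of v u w] sym[of u v] assms \<open>w \<noteq> v\<close> by simp
  qed
qed

lemma deg_eq_1_if_equal_degree_neighbour:
  assumes "u \<in> V" "v \<in> V" "E u v" "d u = d v"
  shows "d u = 1"
proof -
  have "{w\<in>V. E u w} = {v}"
    using unique_neighbour_if_equal_degree[OF assms] assms by blast
  then show ?thesis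
    by (simp add: deg_def)
qed

lemma upper_if_lower_degree_neighbour:
  assumes "u \<in> V" "v \<in> V" "E u v" "d u < d v"
  shows "upper V E v \<and> \<not> upper V E u"
proof
  show "upper V E v"
    using sym[of u v] assms unfolding upper_def by blast
  show "\<not> upper V E u"
  proof
    assume "upper V E u"
    then obtain w where w: "w \<in> V" "E u w" "d w \<le> d u"
      unfolding upper_def by auto
    then have "w \<noteq> v"
      using assms by auto
    then show False
      using no_monotone_P3[of w u v] sym[of u w] assms w by simp
  qed
qed

lemma upper_ne_if_adjacent:
  assumes "u \<in> V" "v \<in> V" "E u v"
  shows "upper V E u \<noteq> upper V E v"
proof -
  have vu: "E v u"
    using sym assms by blast
  consider "d u < d v" | "d v < d u" | "d u = d v"
    by linarith
  then show ?thesis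
  proof cases
    case 1
    then show ?thesis using upper_if_lower_degree_neighbour assms by blast
  next
    case 2
    then show ?thesis using upper_if_lower_degree_neighbour assms vu by blast
  next
    case 3
    have "upper V E x \<longleftrightarrow> y < x"
      if "x \<in> V" "y \<in> V" "E x y" "d x = d y" for x y
    proof
      assume "upper V E x"
      then obtain w where "w \<in> V" "E x w" "d w < d x \<or> d w = d x \<and> w < x"
        unfolding upper_def by blast
      moreover from this have "w = y"
        using unique_neighbour_if_equal_degree that by blast
      ultimately show "y < x"
        using that by simp
    next
      assume "y < x"
      then show "upper V E x"
        using that unfolding upper_def by auto
    qed
    moreover have "u \<noteq> v"
      using irrefl assms by blast
    ultimately show ?thesis
      using assms vu 3 by (metis less_asym' neqE)
  qed
qed

lemma deg_le_if_not_upper: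
  assumes "u \<in> V" "v \<in> V" "E u v" "\<not> upper V E u"
  shows "d u \<le> d v"
  using assms unfolding upper_def by (meson linorder_not_le)

text \<open>\<open>p\<close> maps the lower vertices bijectively onto the upper ones without decreasing degrees,
while both sides have the same degree sum; so degrees are preserved along \<open>p\<close>.\<close>
lemma deg_eq_1_if_perfect_matching:
  assumes p: "\<And>v. v \<in> V \<Longrightarrow> p v \<in> V \<and> E v (p v) \<and> p (p v) = v"
    and "v \<in> V"
  shows "d v = 1"
proof -
  define L where "L = {v\<in>V. \<not> upper V E v}"
  define H where "H = {v\<in>V. upper V E v}"
  have p_L: "p v \<in> H" if "v \<in> L" for v
    using that p upper_ne_if_adjacent unfolding L_def H_def by blast
  have p_H: "p v \<in> L" if "v \<in> H" for v
    using that p upper_ne_if_adjacent unfolding L_def H_def by blast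
  have "p ` L = H"
  proof (intro subset_antisym subsetI)
    fix h
    assume "h \<in> H"
    then have "p h \<in> L" "p (p h) = h"
      using p p_H unfolding H_def by blast+
    then show "h \<in> p ` L"
      by (metis image_eqI)
  qed (use p_L in blast)
  moreover have "inj_on p L"
    using p unfolding L_def by (metis (no_types, lifting) inj_onI mem_Collect_eq)
  ultimately have "(\<Sum>v\<in>L. d (p v)) = (\<Sum>v\<in>H. d v)"
    using sum.reindex[of p L d] by simp
  also have "\<dots> = (\<Sum>v\<in>L. d v)"
    unfolding L_def H_def
    by (rule sum_deg_eq_if_bipartite[OF finite_V sym]) (use upper_ne_if_adjacent in blast)+
  finally have sums: "(\<Sum>v\<in>L. d v) = (\<Sum>v\<in>L. d (p v))" ..
  have le: "d v \<le> d (p v)" if "v \<in> L" for v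
    using that p deg_le_if_not_upper unfolding L_def by blast
  have finite_L: "finite L"
    using finite_V unfolding L_def by simp
  have eq: "d v = d (p v)" if "v \<in> L" for v
  proof (rule ccontr)
    assume "d v \<noteq> d (p v)"
    then have "(\<Sum>v\<in>L. d v) < (\<Sum>v\<in>L. d (p v))"
      using sum_strict_mono_ex1[OF finite_L, of d "\<lambda>v. d (p v)"] le that by fastforce
    then show False
      using sums by simp
  qed
  have one_L: "d v = 1" if "v \<in> L" for v
    using deg_eq_1_if_equal_degree_neighbour eq p that unfolding L_def by blast
  show ?thesis
  proof (cases "v \<in> L")
    case True
    then show ?thesis using one_L by blast
  next
    case False
    then have "v \<in> H" "p v \<in> L" "p (p v) = v"
      using \<open>v \<in> V\<close> p p_H unfolding L_def H_def by blast+
    then show ?thesis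
      using one_L eq by metis
  qed
qed

end

lemma sum_deg_colour_classes:
  assumes "is_k_colouring k n c" and "v < n"
  shows "(\<Sum>j\<in>{1..k}. deg {0..<n} (colour_class c j) v) = n - 1"
proof -
  let ?N = "\<lambda>j. {u\<in>{0..<n}. colour_class c j v u}"
  have "(\<Union>j\<in>{1..k}. ?N j) = {0..<n} - {v}"
    using assms unfolding is_k_colouring_def colour_class_def by force
  moreover have "card (\<Union>j\<in>{1..k}. ?N j) = (\<Sum>j\<in>{1..k}. card (?N j))"
    by (rule card_UN_disjoint) (auto simp: colour_class_def)
  ultimately show ?thesis
    using assms(2) by (simp add: deg_def)
qed

definition toggle :: "'a \<Rightarrow> 'a set \<Rightarrow> 'a set" where
  "toggle j A = (if j \<in> A then A - {j} else insert j A)"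

locale colouring_without_monotone_P3 =
  fixes k n :: nat and c :: "nat \<Rightarrow> nat \<Rightarrow> nat"
  assumes colouring: "is_k_colouring k n c"
    and mp_colour_class_less_3: "\<And>j. j \<in> {1..k} \<Longrightarrow> mp {0..<n} (colour_class c j) < 3"
begin

lemma colour_class_graph:
  assumes "j \<in> {1..k}"
  shows "graph_without_monotone_P3 {0..<n} (colour_class c j)"
  using colouring mp_colour_class_less_3[OF assms]
  by unfold_locales (auto simp: is_k_colouring_def colour_class_def)

lemma colour_of_edge:
  assumes "u < n" "v < n" "u \<noteq> v"
  shows "c u v \<in> {1..k}" "colour_class c (c u v) u v"
  using assms colouring unfolding is_k_colouring_def colour_class_def by auto

definition signature :: "nat \<Rightarrow> nat set" where
  "signature v = {j\<in>{1..k}. upper {0..<n} (colour_class c j) v}"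

lemma signature_differ_at_edge_colour:
  assumes "u < n" "v < n" "u \<noteq> v"
  shows "c u v \<in> signature u \<longleftrightarrow> c u v \<notin> signature v"
proof -
  interpret graph_without_monotone_P3 "{0..<n}" "colour_class c (c u v)"
    using colour_class_graph colour_of_edge(1)[OF assms] .
  have "upper {0..<n} (colour_class c (c u v)) u \<noteq> upper {0..<n} (colour_class c (c u v)) v"
    using upper_ne_if_adjacent colour_of_edge(2)[OF assms] assms by simp
  then show ?thesis
    using colour_of_edge(1)[OF assms] unfolding signature_def by blast
qed

lemma inj_on_signature: "inj_on signature {0..<n}"
  by (rule inj_onI) (use signature_differ_at_edge_colour in fastforce)

lemma bij_betw_signature:
  assumes "2 ^ k \<le> n"
  shows "bij_betw signature {0..<n} (Pow {1..k})"
proof -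
  have "signature ` {0..<n} = Pow {1..k}"
  proof (rule card_seteq)
    show "signature ` {0..<n} \<subseteq> Pow {1..k}"
      unfolding signature_def by auto
    show "card (Pow {1..k}) \<le> card (signature ` {0..<n})"
      using assms card_image[OF inj_on_signature] by (simp add: card_Pow)
  qed simp
  then show ?thesis
    using inj_on_signature by (simp add: bij_betw_def)
qed

definition partner :: "nat \<Rightarrow> nat \<Rightarrow> nat" where
  "partner j v = inv_into {0..<n} signature (toggle j (signature v))"

lemma
  assumes "2 ^ k \<le> n" "j \<in> {1..k}" "v < n"
  shows partner_less: "partner j v < n"
    and signature_partner: "signature (partner j v) = toggle j (signature v)"
proof -
  have "toggle j (signature v) \<in> signature ` {0..<n}"
    using assms bij_betw_signature unfolding toggle_def signature_def bij_betw_def by auto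
  then show "partner j v < n" "signature (partner j v) = toggle j (signature v)"
    unfolding partner_def
    by (simp_all add: inv_into_into[of _ signature "{0..<n}", simplified] f_inv_into_f)
qed

lemma partner_partner:
  assumes "2 ^ k \<le> n" "j \<in> {1..k}" "v < n"
  shows "partner j (partner j v) = v"
proof -
  have "signature (partner j (partner j v)) = signature v"
    using assms partner_less signature_partner unfolding toggle_def by auto
  then show ?thesis
    using assms partner_less inj_on_signature by (simp add: inj_on_eq_iff)
qed

text \<open>Every colour other than \<open>j\<close> lies in both signatures or in neither, so only \<open>j\<close> can be
the colour of the edge joining \<open>v\<close> to its partner.\<close>
lemma colour_class_partner:
  assumes "2 ^ k \<le> n" "j \<in> {1..k}" "v < n"
  shows "colour_class c j v (partner j v)"
proof -
  let ?p = "partner j v"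
  have sig: "signature ?p = toggle j (signature v)" and "?p < n"
    using assms signature_partner partner_less by blast+
  have flipped: "j \<in> signature ?p \<longleftrightarrow> j \<notin> signature v"
    and kept: "\<And>i. i \<noteq> j \<Longrightarrow> i \<in> signature ?p \<longleftrightarrow> i \<in> signature v"
    using sig unfolding toggle_def by auto
  have "v \<noteq> ?p"
    using flipped by auto
  then have "c v ?p \<in> signature v \<longleftrightarrow> c v ?p \<notin> signature ?p"
    by (rule signature_differ_at_edge_colour[OF assms(3) \<open>?p < n\<close>])
  then have "c v ?p = j"
    using kept by metis
  then show ?thesis
    using \<open>v \<noteq> ?p\<close> unfolding colour_class_def by simp
qed

lemma deg_colour_class_eq_1:
  assumes "2 ^ k \<le> n" "j \<in> {1..k}" "v < n"
  shows "deg {0..<n} (colour_class c j) v = 1"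
  using graph_without_monotone_P3.deg_eq_1_if_perfect_matching[OF colour_class_graph[OF assms(2)],
      of "partner j"]
    assms partner_less partner_partner colour_class_partner
  by simp

lemma less_two_pow:
  assumes "k \<ge> 2"
  shows "n < 2 ^ k"
proof (rule ccontr)
  assume "\<not> n < 2 ^ k"
  then have "2 ^ k \<le> n"
    by simp
  then have "0 < n"
    using less_le_trans[OF zero_less_power[of 2 k]] by simp
  then have "n - 1 = k"
    using sum_deg_colour_classes[OF colouring \<open>0 < n\<close>] deg_colour_class_eq_1[OF \<open>2 ^ k \<le> n\<close>]
    by simp
  moreover have "k + 2 \<le> 2 ^ k"
    using assms by (induction k rule: dec_induct) auto
  ultimately show False
    using \<open>2 ^ k \<le> n\<close> by simp
qed

end

theorem proposition3p4:
  fixes k :: nat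
  assumes "k \<ge> 2"
  shows "Mk k 3 \<le> 2 ^ k"
  unfolding Mk_def
proof (rule Least_le, intro allI impI)
  fix n c
  assume "2 ^ k \<le> n" and "is_k_colouring k n c"
  show "\<exists>j\<in>{1..k}. 3 \<le> mp {0..<n} (colour_class c j)"
  proof (rule ccontr)
    assume "\<not> ?thesis"
    then interpret colouring_without_monotone_P3 k n c
      using \<open>is_k_colouring k n c\<close> by unfold_locales (auto simp: not_le)
    show False
      using less_two_pow[OF assms] \<open>2 ^ k \<le> n\<close> by simp
  qed
qed

end
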